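(* Let $L$ be an oriented, ordered, possibly non-compatible virtual link diagram with an affine bilabeling $C$. Then the multi-variable affine index polynomial $p_{(L,C)}$ is an invariant of $(L,C)$ under Reidemeister moves performed away from the starting points of the coloring. Moreover, it is a Vassiliev invariant of order one of the pair $(L,C)$.
   Context: **Diagrams.** A virtual link diagram is an oriented planar diagram of ordered closed curves $L_1,\dots,L_n$ (components) with classical crossings (with over/under information) and virtual crossings. **Crossing conventions.** Draw a classical crossing with both strands oriented upward. - The bottom-left-to-top-right strand has index change $-1$; the bottom-right-to-top-left strand has index change $+1$. - The crossing is positive ($\operatorname{sgn}=+1$) if the overstrand is the bottom-left-to-top-right strand, and negative otherwise. - Self-crossings have both strands on one component; external crossings have strands on different components. - The weight $n_i$ of component $L_i$ is the sum of the index changes of $L_i$ over its passages through external classical crossings. **Affine bilabeling $C$.** - Each component $L_i$ gets a starting point with bilabel $(a^{(i)}_1,a^{(i)}_2)$ of formal integer variables, distinct for different components. - Travel along $L_i$ in its orientation, carrying the bilabel. It is unchanged at virtual crossings. - On passing a classical crossing with index change $\varepsilon$, the first entry changes by $\varepsilon$ at a self-crossing, and the second entry changes by $\varepsilon$ at an external crossing. - On returning to the starting point, the label is $(a^{(i)}_1,a^{(i)}_2+n_i)$. This discrepancy is absorbed at the starting point, which carries the weight $n_i$; the labeling is discontinuous there. **Weights and polynomial.** Let $|(x,y)|=x+y$. With both strands drawn upward: - if $c$ is positive, $W(c)=|\text{bottom-left}|-|\text{top-left}|$; - if $c$ is negative, $W(c)=|\text{bottom-right}|-|\text{top-right}|$.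 Then $p_{(L,C)}(t_1,\dots,t_n)=\sum_c\operatorname{sgn}(c)(t_{o(c)}^{W(c)}-1)$, summed over classical crossings, where $o(c)$ is the component of the overstrand. **Vassiliev invariants.** - Singular virtual links have finitely many double points, assumed away from the starting points. - The extension of an invariant $V$ is $V(L_\times)=V(L_+)-V(L_-)$, with $L_\pm$ the positive/negative resolutions of a double point, applied iteratively. - Colorings of singular links are obtained by treating double points as crossings for label propagation, which is sign-independent. - Order $\le m$ means the extension vanishes on all singular links with more than $m$ double points. - Order one means order $\le 1$ but not order $\le 0$. *)

theory Defs
  imports Main
begin

text \<open>A virtual link diagram (up to the virtual moves, which do not change it) with a
starting point on each component is encoded by its based Gauss diagram:
component i (0-based, ordered) is the list of its passages through classical crossings,
read from the starting point in the direction of the orientation.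
A passage is a pair (c, e): crossing name c and the index change e of that strand at c
(e = -1: bottom-left-to-top-right strand, e = +1: bottom-right-to-top-left strand,
when both strands are drawn upward).
The overstrand of c is the strand with index change -sg c.\<close>

record gdiag =
  comps :: "(nat \<times> int) list list"
  sg :: "nat \<Rightarrow> int"

definition at :: "gdiag \<Rightarrow> nat \<times> nat \<Rightarrow> nat \<times> int" where
  "at D q = comps D ! fst q ! snd q"

definition passages :: "gdiag \<Rightarrow> (nat \<times> nat) set" where
  "passages D = {(i, k). i < length (comps D) \<and> k < length (comps D ! i)}"

definition crossings :: "gdiag \<Rightarrow> nat set" where
  "crossings D = (\<lambda>q. fst (at D q)) ` passages D"

definition wf :: "gdiag \<Rightarrow> bool" where
  "wf D \<longleftrightarrow> (\<forall>q\<in>passages D. snd (at D q) \<in> {-1, 1}) \<and>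
     (\<forall>c\<in>crossings D. sg D c \<in> {-1, 1} \<and>
        (\<forall>e\<in>{-1::int, 1}. \<exists>!q. q \<in> passages D \<and> at D q = (c, e)))"

definition pos :: "gdiag \<Rightarrow> nat \<times> int \<Rightarrow> nat \<times> nat" where
  "pos D x = (THE q. q \<in> passages D \<and> at D q = x)"

definition self_pass :: "gdiag \<Rightarrow> nat \<times> nat \<Rightarrow> bool" where
  "self_pass D q \<longleftrightarrow> fst (pos D (fst (at D q), - snd (at D q))) = fst q"

text \<open>a i = starting bilabel of component i.  lab D a (i, k) is the bilabel carried on
component i just before its k-th passage (k = length gives the label just before
returning to the starting point).\<close>
definition lab :: "gdiag \<Rightarrow> (nat \<Rightarrow> int \<times> int) \<Rightarrow> nat \<times> nat \<Rightarrow> int \<times> int" where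
  "lab D a q =
     (fst (a (fst q)) + (\<Sum>j<snd q. if self_pass D (fst q, j) then snd (at D (fst q, j)) else 0),
      snd (a (fst q)) + (\<Sum>j<snd q. if self_pass D (fst q, j) then 0 else snd (at D (fst q, j))))"

definition absl :: "int \<times> int \<Rightarrow> int" where
  "absl x = fst x + snd x"

definition over_pos :: "gdiag \<Rightarrow> nat \<Rightarrow> nat \<times> nat" where
  "over_pos D c = pos D (c, - sg D c)"

definition under_pos :: "gdiag \<Rightarrow> nat \<Rightarrow> nat \<times> nat" where
  "under_pos D c = pos D (c, sg D c)"

text \<open>W(c) = |incoming label of overstrand| - |outgoing label of understrand|; this is
|bottom-left| - |top-left| for positive and |bottom-right| - |top-right| for negative c.\<close>
definition W :: "gdiag \<Rightarrow> (nat \<Rightarrow> int \<times> int) \<Rightarrow> nat \<Rightarrow> int" where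
  "W D a c = absl (lab D a (over_pos D c))
             - absl (lab D a (fst (under_pos D c), Suc (snd (under_pos D c))))"

definition ocomp :: "gdiag \<Rightarrow> nat \<Rightarrow> nat" where
  "ocomp D c = fst (over_pos D c)"

text \<open>Laurent polynomials in t_0, t_1, ... are coefficient functions on exponent
vectors (nat \<Rightarrow> int).  mono i k is the exponent vector of t_i^k.\<close>
definition mono :: "nat \<Rightarrow> int \<Rightarrow> nat \<Rightarrow> int" where
  "mono i k = (\<lambda>j. if j = i then k else 0)"

definition aff_poly :: "gdiag \<Rightarrow> (nat \<Rightarrow> int \<times> int) \<Rightarrow> (nat \<Rightarrow> int) \<Rightarrow> int" where
  "aff_poly D a m = (\<Sum>c\<in>crossings D. sg D c *
      ((if m = mono (ocomp D c) (W D a c) then 1 else 0) - (if m = (\<lambda>_. 0) then 1 else 0)))"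

definition adj :: "gdiag \<Rightarrow> nat \<times> int \<Rightarrow> nat \<times> int \<Rightarrow> bool" where
  "adj D x y \<longleftrightarrow> (\<exists>i k. i < length (comps D) \<and> Suc k < length (comps D ! i) \<and>
      comps D ! i ! k = x \<and> comps D ! i ! Suc k = y)"

definition delx :: "nat set \<Rightarrow> gdiag \<Rightarrow> (nat \<times> int) list list" where
  "delx C D = map (filter (\<lambda>x. fst x \<notin> C)) (comps D)"

definition r1 :: "gdiag \<Rightarrow> gdiag \<Rightarrow> bool" where
  "r1 D D' \<longleftrightarrow> (\<exists>c e. c \<notin> crossings D \<and> e \<in> {-1, 1} \<and> delx {c} D' = comps D \<and>
      (\<forall>x\<in>crossings D. sg D' x = sg D x) \<and> adj D' (c, e) (c, - e))"

definition r2 :: "gdiag \<Rightarrow> gdiag \<Rightarrow> bool" where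
  "r2 D D' \<longleftrightarrow> (\<exists>c d. c \<noteq> d \<and> c \<notin> crossings D \<and> d \<notin> crossings D \<and>
      delx {c, d} D' = comps D \<and> (\<forall>x\<in>crossings D. sg D' x = sg D x) \<and>
      sg D' d = - sg D' c \<and>
      adj D' (c, - sg D' c) (d, sg D' c) \<and>
      (adj D' (c, sg D' c) (d, - sg D' c) \<or> adj D' (d, - sg D' c) (c, sg D' c)))"

definition swap2 :: "'a \<Rightarrow> 'a \<Rightarrow> 'a \<Rightarrow> 'a" where
  "swap2 u v p = (if p = u then v else if p = v then u else p)"

text \<open>R3: top strand T over both, middle M, bottom B; x = TM, y = TB, z = MB.
eT = 1 iff T passes x before y, eM = 1 iff M passes x before z, eB = 1 iff B passes y
before z.  The sign conditions are exactly the realizability of the triangle.\<close>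
definition r3 :: "gdiag \<Rightarrow> gdiag \<Rightarrow> bool" where
  "r3 D D' \<longleftrightarrow> (\<exists>x y z eT eM eB. distinct [x, y, z] \<and> sg D' = sg D \<and>
      (let Tx = (x, - sg D x); Ty = (y, - sg D y);
           Mx = (x, sg D x); Mz = (z, - sg D z);
           By = (y, sg D y); Bz = (z, sg D z) in
       ((eT = 1 \<and> adj D Tx Ty) \<or> (eT = -1 \<and> adj D Ty Tx)) \<and>
       ((eM = 1 \<and> adj D Mx Mz) \<or> (eM = -1 \<and> adj D Mz Mx)) \<and>
       ((eB = 1 \<and> adj D By Bz) \<or> (eB = -1 \<and> adj D Bz By)) \<and>
       sg D x * sg D y = eM * eB \<and> sg D x * sg D z = eT * eB \<and>
       comps D' = map (map (swap2 Tx Ty \<circ> swap2 Mx Mz \<circ> swap2 By Bz)) (comps D)))"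

text \<open>Renaming crossings (the names carry no geometric meaning).\<close>
definition rename :: "gdiag \<Rightarrow> gdiag \<Rightarrow> bool" where
  "rename D D' \<longleftrightarrow> (\<exists>f. inj_on f (crossings D) \<and>
      comps D' = map (map (apfst f)) (comps D) \<and> (\<forall>c\<in>crossings D. sg D' (f c) = sg D c))"

definition rmove :: "gdiag \<Rightarrow> gdiag \<Rightarrow> bool" where
  "rmove D D' \<longleftrightarrow> wf D \<and> wf D' \<and> (r1 D D' \<or> r2 D D' \<or> r3 D D' \<or> rename D D')"

definition requiv :: "gdiag \<Rightarrow> gdiag \<Rightarrow> bool" where
  "requiv = (\<lambda>D D'. rmove D D' \<or> rmove D' D)\<^sup>*\<^sup>*"

text \<open>A singular diagram is a diagram D together with the set S of crossings that are
double points (their sign in D is ignored).  resolve D S P resolves the double points in P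
positively and those in S - P negatively.\<close>
definition resolve :: "gdiag \<Rightarrow> nat set \<Rightarrow> nat set \<Rightarrow> gdiag" where
  "resolve D S P = D\<lparr>sg := (\<lambda>c. if c \<in> S then (if c \<in> P then 1 else -1) else sg D c)\<rparr>"

definition vext :: "(gdiag \<Rightarrow> (nat \<Rightarrow> int \<times> int) \<Rightarrow> 'm \<Rightarrow> int) \<Rightarrow> gdiag \<Rightarrow> nat set
                    \<Rightarrow> (nat \<Rightarrow> int \<times> int) \<Rightarrow> 'm \<Rightarrow> int" where
  "vext V D S a m = (\<Sum>P\<in>Pow S. (-1) ^ card (S - P) * V (resolve D S P) a m)"

definition vorder_le :: "(gdiag \<Rightarrow> (nat \<Rightarrow> int \<times> int) \<Rightarrow> 'm \<Rightarrow> int) \<Rightarrow> nat \<Rightarrow> bool" where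
  "vorder_le V k \<longleftrightarrow> (\<forall>D S a m. wf D \<and> S \<subseteq> crossings D \<and> card S > k \<longrightarrow> vext V D S a m = 0)"

definition vorder_one :: "(gdiag \<Rightarrow> (nat \<Rightarrow> int \<times> int) \<Rightarrow> 'm \<Rightarrow> int) \<Rightarrow> bool" where
  "vorder_one V \<longleftrightarrow> vorder_le V 1 \<and> \<not> vorder_le V 0"

end

theory Submission
  imports Defs
begin

text \<open>Since \<open>|(x, y)| = x + y\<close>, the norm of a bilabel does not see whether a crossing was
  a self-crossing or an external one: just before a strand \<open>w\<close> it is \<open>|a|\<close> of the component
  plus the sum of the index changes passed since the starting point. Hence
  \<open>W(c) = |over| - |under| - sgn c\<close>. An R1 or R2 move inserts adjacent strands with cancelling
  index changes, so all other norms survive; the R1 kink has \<open>W = 0\<close>, and the two R2 crossings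
  have the same \<open>W\<close> and the same overstrand component but opposite signs. An R3 move swaps
  three pairs of adjacent strands; each swap shifts the norms of the two strands by plus or
  minus the index change of the partner, and the sign conditions of the triangle make these
  shifts cancel in every \<open>W\<close>. The term of a crossing depends on the signs only through its
  own sign, so alternating sums over two or more double points vanish, while a virtual Hopf
  link with one classical crossing shows that the order is not zero.\<close>

section \<open>Prefixes of distinct lists\<close>

lemma nth_mem_set_take_iff:
  assumes "distinct xs" "j < length xs"
  shows "xs ! j \<in> set (take k xs) \<longleftrightarrow> j < k"
proof
  assume "xs ! j \<in> set (take k xs)"
  then obtain i where "i < k" "i < length xs" "xs ! i = xs ! j"
    by (auto simp: in_set_conv_nth)
  with assms show "j < k" by (simp add: nth_eq_iff_index_eq)
next
  assume "j < k"
  with assms(2) show "xs ! j \<in> set (take k xs)"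
    by (metis in_set_conv_nth length_take min_less_iff_conj nth_take)
qed

lemma takeWhile_neq_nth:
  assumes "distinct xs" "k < length xs"
  shows "takeWhile (\<lambda>y. y \<noteq> xs ! k) xs = take k xs"
  using assms by (intro takeWhile_eq_take_P_nth) (auto simp: nth_eq_iff_index_eq)

lemma takeWhile_neq_filter:
  "P w \<Longrightarrow> takeWhile (\<lambda>y. y \<noteq> w) (filter P xs) = filter P (takeWhile (\<lambda>y. y \<noteq> w) xs)"
  by (induction xs) auto

lemma takeWhile_neq_map:
  assumes "inj_on f (insert w (set xs))"
  shows "takeWhile (\<lambda>y. y \<noteq> f w) (map f xs) = map f (takeWhile (\<lambda>y. y \<noteq> w) xs)"
  using assms by (induction xs) (auto simp: inj_on_def)

lemma sum_lessThan_nth_eq_sum_set_take: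
  assumes "distinct xs" "k \<le> length xs"
  shows "(\<Sum>j<k. f (xs ! j)) = sum f (set (take k xs))"
proof -
  have "(\<Sum>j<k. f (xs ! j)) = sum_list (map f (take k xs))"
    using assms(2) by (simp add: sum_list_sum_nth atLeast0LessThan min_absorb2)
  also have "\<dots> = sum f (set (take k xs))"
    using assms(1) by (simp add: sum_list_distinct_conv_sum_set)
  finally show ?thesis .
qed

section \<open>Strands and their positions\<close>

definition strands :: "gdiag \<Rightarrow> (nat \<times> int) set" where
  "strands D = (\<Union>xs\<in>set (comps D). set xs)"

lemma strands_conv_nth:
  "x \<in> strands D \<longleftrightarrow>
     (\<exists>i k. i < length (comps D) \<and> k < length (comps D ! i) \<and> comps D ! i ! k = x)"
  unfolding strands_def UN_iff Bex_def in_set_conv_nth by blast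

lemma set_comp_subset_strands: "i < length (comps D) \<Longrightarrow> set (comps D ! i) \<subseteq> strands D"
  unfolding strands_def using nth_mem by blast

lemma crossings_eq_fst_strands: "crossings D = fst ` strands D"
  unfolding crossings_def passages_def at_def by (force simp: strands_conv_nth image_iff)

lemma finite_crossings: "finite (crossings D)"
  by (simp add: crossings_eq_fst_strands strands_def)

lemma fst_in_crossings: "x \<in> strands D \<Longrightarrow> fst x \<in> crossings D"
  by (simp add: crossings_eq_fst_strands)

lemma wf_sg: "wf D \<Longrightarrow> c \<in> crossings D \<Longrightarrow> sg D c \<in> {-1, 1}"
  unfolding wf_def by blast

lemma wf_index_change: "wf D \<Longrightarrow> x \<in> strands D \<Longrightarrow> snd x \<in> {-1, 1}"
  unfolding wf_def passages_def at_def strands_conv_nth by force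

lemma wf_strand_of_crossing:
  assumes "wf D" "c \<in> crossings D" "e \<in> {-1, 1}"
  shows "(c, e) \<in> strands D"
proof -
  from assms obtain q where "q \<in> passages D" "at D q = (c, e)"
    unfolding wf_def by blast
  then show ?thesis unfolding strands_conv_nth passages_def at_def by (cases q) auto
qed

lemma wf_pos_nth:
  assumes "wf D" "i < length (comps D)" "k < length (comps D ! i)"
  shows "pos D (comps D ! i ! k) = (i, k)"
proof -
  let ?x = "comps D ! i ! k"
  have q: "(i, k) \<in> passages D" "at D (i, k) = ?x"
    using assms by (auto simp: passages_def at_def)
  have "fst ?x \<in> crossings D"
    using q unfolding crossings_def by force
  moreover have "snd ?x \<in> {-1, 1}"
    using assms(1) q unfolding wf_def by force
  ultimately have "\<exists>!q. q \<in> passages D \<and> at D q = (fst ?x, snd ?x)"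
    using assms(1) unfolding wf_def by blast
  with q show ?thesis
    unfolding pos_def by (metis (mono_tags, lifting) prod.collapse the1_equality)
qed

lemma wf_distinct_comp:
  assumes "wf D" "i < length (comps D)"
  shows "distinct (comps D ! i)"
  unfolding distinct_conv_nth using wf_pos_nth[OF assms] by (metis prod.inject)

lemma wf_pos_in_comp:
  assumes "wf D" "i < length (comps D)" "x \<in> set (comps D ! i)"
  shows "fst (pos D x) = i"
proof -
  obtain k where "k < length (comps D ! i)" "comps D ! i ! k = x"
    using assms(3) by (auto simp: in_set_conv_nth)
  with wf_pos_nth[OF assms(1,2)] show ?thesis by fastforce
qed

lemma wf_pos_strand:
  assumes "wf D" "x \<in> strands D"
  shows "fst (pos D x) < length (comps D)" "snd (pos D x) < length (comps D ! fst (pos D x))"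
    "comps D ! fst (pos D x) ! snd (pos D x) = x"
proof -
  obtain i k where "i < length (comps D)" "k < length (comps D ! i)" "comps D ! i ! k = x"
    using assms(2) by (auto simp: strands_conv_nth)
  with wf_pos_nth[OF assms(1)] show "fst (pos D x) < length (comps D)"
    "snd (pos D x) < length (comps D ! fst (pos D x))" "comps D ! fst (pos D x) ! snd (pos D x) = x"
    by fastforce+
qed

lemma wf_pos_inj:
  "wf D \<Longrightarrow> x \<in> strands D \<Longrightarrow> y \<in> strands D \<Longrightarrow> pos D x = pos D y \<Longrightarrow> x = y"
  by (metis wf_pos_strand(3))

section \<open>Norms of labels\<close>

definition earlier :: "gdiag \<Rightarrow> nat \<times> int \<Rightarrow> (nat \<times> int) set" where
  "earlier D w = set (takeWhile (\<lambda>y. y \<noteq> w) (comps D ! fst (pos D w)))"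

definition lab_norm :: "gdiag \<Rightarrow> (nat \<Rightarrow> int \<times> int) \<Rightarrow> nat \<times> int \<Rightarrow> int" where
  "lab_norm D a w = absl (a (fst (pos D w))) + sum snd (earlier D w)"

lemma finite_earlier: "finite (earlier D w)"
  by (simp add: earlier_def)

lemma not_in_earlier_self: "w \<notin> earlier D w"
  by (auto simp: earlier_def dest: set_takeWhileD)

lemma earlier_nth:
  assumes "wf D" "i < length (comps D)" "k < length (comps D ! i)"
  shows "earlier D (comps D ! i ! k) = set (take k (comps D ! i))"
  unfolding earlier_def wf_pos_nth[OF assms]
  using takeWhile_neq_nth[OF wf_distinct_comp[OF assms(1,2)] assms(3)] by simp

lemma earlier_subset_strands:
  assumes "wf D" "w \<in> strands D"
  shows "earlier D w \<subseteq> strands D"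
proof -
  have "earlier D w \<subseteq> set (comps D ! fst (pos D w))"
    by (auto simp: earlier_def dest: set_takeWhileD)
  with set_comp_subset_strands[OF wf_pos_strand(1)[OF assms]] show ?thesis
    by blast
qed

lemma earlier_iff_pos:
  assumes "wf D" "w \<in> strands D" "z \<in> strands D"
  shows "z \<in> earlier D w \<longleftrightarrow>
    fst (pos D z) = fst (pos D w) \<and> snd (pos D z) < snd (pos D w)"
proof -
  let ?j = "fst (pos D w)" and ?m = "snd (pos D w)"
  have j: "?j < length (comps D)" and m: "?m < length (comps D ! ?j)"
    using wf_pos_strand[OF assms(1,2)] by simp_all
  have E: "earlier D w = set (take ?m (comps D ! ?j))"
    using earlier_nth[OF assms(1) j m] wf_pos_strand(3)[OF assms(1,2)] by simp
  have z: "comps D ! fst (pos D z) ! snd (pos D z) = z"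
    using wf_pos_strand(3)[OF assms(1,3)] by simp
  show ?thesis
  proof
    assume "z \<in> earlier D w"
    then have "z \<in> set (comps D ! ?j)"
      unfolding E by (meson in_set_takeD)
    then have "fst (pos D z) = ?j"
      using wf_pos_in_comp[OF assms(1) j] by simp
    moreover from this have "comps D ! ?j ! snd (pos D z) \<in> set (take ?m (comps D ! ?j))"
      using \<open>z \<in> earlier D w\<close> z unfolding E by simp
    ultimately show "fst (pos D z) = ?j \<and> snd (pos D z) < ?m"
      using wf_pos_strand(2)[OF assms(1,3)]
        nth_mem_set_take_iff[OF wf_distinct_comp[OF assms(1) j]] by simp
  next
    assume H: "fst (pos D z) = ?j \<and> snd (pos D z) < ?m"
    then have "comps D ! ?j ! snd (pos D z) \<in> set (take ?m (comps D ! ?j))"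
      using wf_pos_strand(2)[OF assms(1,3)]
        nth_mem_set_take_iff[OF wf_distinct_comp[OF assms(1) j]] by simp
    then show "z \<in> earlier D w"
      unfolding E using z H by simp
  qed
qed

lemma absl_lab: "absl (lab D a q) = absl (a (fst q)) + (\<Sum>j<snd q. snd (at D (fst q, j)))"
proof -
  have "(\<Sum>j<snd q. if self_pass D (fst q, j) then snd (at D (fst q, j)) else 0) +
        (\<Sum>j<snd q. if self_pass D (fst q, j) then 0 else snd (at D (fst q, j)))
      = (\<Sum>j<snd q. snd (at D (fst q, j)))"
    by (simp add: sum.distrib[symmetric]) (rule sum.cong, auto)
  then show ?thesis by (simp add: lab_def absl_def)
qed

lemma absl_lab_pos:
  assumes "wf D" "x \<in> strands D"
  shows "absl (lab D a (pos D x)) = lab_norm D a x"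
proof -
  let ?i = "fst (pos D x)" and ?k = "snd (pos D x)"
  have i: "?i < length (comps D)" and k: "?k < length (comps D ! ?i)"
    using wf_pos_strand[OF assms] by simp_all
  have "earlier D x = set (take ?k (comps D ! ?i))"
    using earlier_nth[OF assms(1) i k] wf_pos_strand(3)[OF assms] by simp
  moreover have "(\<Sum>j<?k. snd (at D (?i, j))) = sum snd (set (take ?k (comps D ! ?i)))"
    using sum_lessThan_nth_eq_sum_set_take[OF wf_distinct_comp[OF assms(1) i], of ?k snd] k
    by (simp add: at_def)
  ultimately show ?thesis
    by (simp add: lab_norm_def absl_lab)
qed

lemma W_eq_lab_norm:
  assumes "wf D" "c \<in> crossings D"
  shows "W D a c = lab_norm D a (c, - sg D c) - lab_norm D a (c, sg D c) - sg D c"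
proof -
  have s: "sg D c \<in> {-1, 1}"
    using wf_sg[OF assms] .
  then have o: "(c, - sg D c) \<in> strands D" and u: "(c, sg D c) \<in> strands D"
    using wf_strand_of_crossing[OF assms] by auto
  have "absl (lab D a (fst (pos D (c, sg D c)), Suc (snd (pos D (c, sg D c)))))
      = absl (lab D a (pos D (c, sg D c))) + snd (at D (pos D (c, sg D c)))"
    by (simp add: absl_lab)
  also have "\<dots> = lab_norm D a (c, sg D c) + sg D c"
    using absl_lab_pos[OF assms(1) u] wf_pos_strand(3)[OF assms(1) u] by (simp add: at_def)
  finally show ?thesis
    unfolding W_def over_pos_def under_pos_def using absl_lab_pos[OF assms(1) o] by simp
qed

lemma adjE:
  assumes "adj D u v"
  obtains i k where "i < length (comps D)" "Suc k < length (comps D ! i)"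
    "comps D ! i ! k = u" "comps D ! i ! Suc k = v"
  using assms unfolding adj_def by blast

lemma adj_strands: "adj D u v \<Longrightarrow> u \<in> strands D \<and> v \<in> strands D"
  by (auto elim!: adjE simp: strands_conv_nth intro: Suc_lessD)

lemma wf_adj_pos:
  assumes "wf D" "adj D u v"
  shows "fst (pos D v) = fst (pos D u)" "snd (pos D v) = Suc (snd (pos D u))"
proof -
  obtain i k where "i < length (comps D)" "Suc k < length (comps D ! i)"
    "comps D ! i ! k = u" "comps D ! i ! Suc k = v"
    using assms(2) by (rule adjE)
  then have "pos D u = (i, k)" "pos D v = (i, Suc k)"
    using wf_pos_nth[OF assms(1)] by (metis Suc_lessD)+
  then show "fst (pos D v) = fst (pos D u)" "snd (pos D v) = Suc (snd (pos D u))"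
    by simp_all
qed

lemma adj_asym: "wf D \<Longrightarrow> adj D u v \<Longrightarrow> \<not> adj D v u"
  using wf_adj_pos(2)[of D u v] wf_adj_pos(2)[of D v u] by auto

lemma lab_norm_adj:
  assumes "wf D" "adj D u v"
  shows "lab_norm D a v = lab_norm D a u + snd u"
proof -
  have u: "u \<in> strands D" and v: "v \<in> strands D"
    using adj_strands[OF assms(2)] by auto
  have "pos D v = (fst (pos D u), Suc (snd (pos D u)))"
    using wf_adj_pos[OF assms] by (simp add: prod_eq_iff)
  then have "absl (lab D a (pos D v)) = absl (lab D a (pos D u)) + snd (at D (pos D u))"
    by (simp add: absl_lab)
  then show ?thesis
    using absl_lab_pos[OF assms(1) u] absl_lab_pos[OF assms(1) v]
      wf_pos_strand(3)[OF assms(1) u] by (simp add: at_def)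
qed

lemma adj_in_earlier: "wf D \<Longrightarrow> adj D u v \<Longrightarrow> u \<in> earlier D v"
  using earlier_iff_pos[of D v u] wf_adj_pos[of D u v] adj_strands[of D u v] by simp

lemma earlier_adj_iff:
  assumes "wf D" "adj D u v" "w \<in> strands D" "w \<noteq> v"
  shows "u \<in> earlier D w \<longleftrightarrow> v \<in> earlier D w"
proof -
  have u: "u \<in> strands D" and v: "v \<in> strands D"
    using adj_strands[OF assms(2)] by auto
  have "pos D w \<noteq> pos D v"
    using wf_pos_inj[OF assms(1) assms(3) v] assms(4) by blast
  then show ?thesis
    using earlier_iff_pos[OF assms(1,3) u] earlier_iff_pos[OF assms(1,3) v] wf_adj_pos[OF assms(1,2)]
    by (auto simp: prod_eq_iff)
qed

lemma sum_earlier_cancelling_pair: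
  assumes "wf D" "adj D u v \<or> adj D v u" "snd v = - snd u" "w \<in> strands D" "w \<notin> {u, v}"
  shows "sum snd (earlier D w \<inter> {u, v}) = 0"
proof -
  have "u \<noteq> v"
    using assms(2) adj_asym[OF assms(1)] by blast
  moreover have "u \<in> earlier D w \<longleftrightarrow> v \<in> earlier D w"
    using assms(2,5) earlier_adj_iff[OF assms(1) _ assms(4)] by blast
  ultimately show ?thesis
    using assms(3) by (cases "v \<in> earlier D w") (auto simp: Int_insert_right)
qed

section \<open>Invariance under Reidemeister moves\<close>

definition aff_term :: "gdiag \<Rightarrow> (nat \<Rightarrow> int \<times> int) \<Rightarrow> nat \<Rightarrow> (nat \<Rightarrow> int) \<Rightarrow> int" where
  "aff_term D a c m = sg D c *
     ((if m = mono (ocomp D c) (W D a c) then 1 else 0) - (if m = (\<lambda>_. 0) then 1 else 0))"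

lemma aff_poly_eq_sum_aff_term: "aff_poly D a m = (\<Sum>c\<in>crossings D. aff_term D a c m)"
  by (simp add: aff_poly_def aff_term_def)

lemma aff_term_eqI:
  assumes "wf D" "wf D'" "c \<in> crossings D" "c' \<in> crossings D'" "sg D' c' = sg D c"
    and "lab_norm D' a (c', - sg D c) = lab_norm D a (c, - sg D c)"
    and "lab_norm D' a (c', sg D c) = lab_norm D a (c, sg D c)"
    and "fst (pos D' (c', - sg D c)) = fst (pos D (c, - sg D c))"
  shows "aff_term D' a c' = aff_term D a c"
  unfolding aff_term_def ocomp_def over_pos_def
    W_eq_lab_norm[OF assms(1,3)] W_eq_lab_norm[OF assms(2,4)]
  using assms(5-8) by simp

lemma earlier_inter_crossing:
  assumes "wf D" "w \<in> strands D" "e \<in> {-1, 1}"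
  shows "earlier D w \<inter> {y. fst y = c} = earlier D w \<inter> {(c, e), (c, - e)}"
proof -
  have "y \<in> {(c, e), (c, - e)}" if "y \<in> earlier D w" "fst y = c" for y
  proof -
    have "snd y \<in> {-1, 1}"
      using that(1) wf_index_change[OF assms(1)] earlier_subset_strands[OF assms(1,2)] by blast
    with that(2) assms(3) show ?thesis by (cases y) auto
  qed
  then show ?thesis by auto
qed

lemma strands_delx: "comps D = delx C D' \<Longrightarrow> strands D = {y \<in> strands D'. fst y \<notin> C}"
  by (auto simp: strands_def delx_def)

lemma crossings_delx: "comps D = delx C D' \<Longrightarrow> crossings D = crossings D' - C"
  unfolding crossings_eq_fst_strands by (auto simp: strands_delx)

lemma lab_norm_delx:
  assumes "wf D" "wf D'" "comps D = delx C D'" "x \<in> strands D"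
    and cancel: "sum snd (earlier D' x \<inter> {y. fst y \<in> C}) = 0"
  shows "lab_norm D a x = lab_norm D' a x" "fst (pos D x) = fst (pos D' x)"
proof -
  obtain i where i: "i < length (comps D)" "x \<in> set (comps D ! i)"
    using assms(4) unfolding strands_conv_nth by (metis nth_mem)
  have len: "length (comps D') = length (comps D)"
    using assms(3) by (simp add: delx_def)
  have ci: "comps D ! i = filter (\<lambda>y. fst y \<notin> C) (comps D' ! i)"
    using assms(3) i(1) by (simp add: delx_def)
  then have i': "i < length (comps D')" "x \<in> set (comps D' ! i)" and x: "fst x \<notin> C"
    using i len by auto
  have p: "fst (pos D x) = i" "fst (pos D' x) = i"
    using wf_pos_in_comp[OF assms(1) i] wf_pos_in_comp[OF assms(2) i'] by simp_all
  then show "fst (pos D x) = fst (pos D' x)" by simp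
  have "earlier D x = earlier D' x \<inter> {y. fst y \<notin> C}"
    unfolding earlier_def p ci takeWhile_neq_filter[of "\<lambda>y. fst y \<notin> C", OF x] by auto
  moreover have "sum snd (earlier D' x) =
      sum snd (earlier D' x \<inter> {y. fst y \<notin> C}) + sum snd (earlier D' x \<inter> {y. fst y \<in> C})"
    using sum.Int_Diff[OF finite_earlier, of snd D' x "{y. fst y \<notin> C}"]
    by (simp add: set_diff_eq Int_def)
  ultimately show "lab_norm D a x = lab_norm D' a x"
    unfolding lab_norm_def p using cancel by simp
qed

lemma aff_poly_delx:
  assumes "wf D" "wf D'" "comps D = delx C D'" "C \<subseteq> crossings D'"
    and "\<forall>c\<in>crossings D. sg D' c = sg D c"
    and cancel: "\<And>x. x \<in> strands D \<Longrightarrow> sum snd (earlier D' x \<inter> {y. fst y \<in> C}) = 0"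
  shows "aff_poly D' a m = aff_poly D a m + (\<Sum>c\<in>C. aff_term D' a c m)"
proof -
  have cr: "crossings D' = crossings D \<union> C" "crossings D \<inter> C = {}"
    using crossings_delx[OF assms(3)] assms(4) by auto
  have old: "aff_term D' a c = aff_term D a c" if c: "c \<in> crossings D" for c
  proof -
    have "(c, - sg D c) \<in> strands D" "(c, sg D c) \<in> strands D"
      using wf_strand_of_crossing[OF assms(1) c] wf_sg[OF assms(1) c] by auto
    then show ?thesis
      using aff_term_eqI[OF assms(1,2) c] lab_norm_delx[OF assms(1-3) _ cancel] cr(1) c assms(5)
      by simp
  qed
  have "aff_poly D' a m = (\<Sum>c\<in>crossings D. aff_term D' a c m) + (\<Sum>c\<in>C. aff_term D' a c m)"
    unfolding aff_poly_eq_sum_aff_term cr(1)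
    using sum.union_disjoint[OF _ _ cr(2)] finite_crossings[of D'] cr(1) by simp
  also have "(\<Sum>c\<in>crossings D. aff_term D' a c m) = aff_poly D a m"
    unfolding aff_poly_eq_sum_aff_term using old by simp
  finally show ?thesis .
qed

lemma aff_poly_r1:
  assumes "wf D" "wf D'" "r1 D D'"
  shows "aff_poly D a = aff_poly D' a"
proof
  fix m
  obtain c e where ce: "e \<in> {-1, 1}" "delx {c} D' = comps D"
    "\<forall>x\<in>crossings D. sg D' x = sg D x" and kink: "adj D' (c, e) (c, - e)"
    using assms(3) unfolding r1_def by blast
  have c: "c \<in> crossings D'"
    using adj_strands[OF kink] fst_in_crossings by fastforce
  have cancel: "sum snd (earlier D' x \<inter> {y. fst y \<in> {c}}) = 0" if x: "x \<in> strands D" for x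
  proof -
    have x': "x \<in> strands D'" "x \<notin> {(c, e), (c, - e)}"
      using x strands_delx[OF ce(2)[symmetric]] by auto
    then have "earlier D' x \<inter> {y. fst y \<in> {c}} = earlier D' x \<inter> {(c, e), (c, - e)}"
      using earlier_inter_crossing[OF assms(2) _ ce(1)] by simp
    then show ?thesis
      using sum_earlier_cancelling_pair[OF assms(2) _ _ x'] kink by simp
  qed
  have "W D' a c = 0"
    using W_eq_lab_norm[OF assms(2) c] lab_norm_adj[OF assms(2) kink] wf_sg[OF assms(2) c] ce(1)
    by auto
  then have "aff_term D' a c m = 0"
    by (simp add: aff_term_def mono_def fun_eq_iff)
  then show "aff_poly D a m = aff_poly D' a m"
    using aff_poly_delx[OF assms(1,2) ce(2)[symmetric] _ ce(3) cancel] c by simp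
qed

lemma aff_poly_r2:
  assumes "wf D" "wf D'" "r2 D D'"
  shows "aff_poly D a = aff_poly D' a"
proof
  fix m
  obtain c d where cd: "c \<noteq> d" "delx {c, d} D' = comps D"
      "\<forall>x\<in>crossings D. sg D' x = sg D x" "sg D' d = - sg D' c"
    and over: "adj D' (c, - sg D' c) (d, sg D' c)"
    and under: "adj D' (c, sg D' c) (d, - sg D' c) \<or> adj D' (d, - sg D' c) (c, sg D' c)"
    using assms(3) unfolding r2_def by blast
  define s where "s = sg D' c"
  have c: "c \<in> crossings D'" and d: "d \<in> crossings D'"
    using adj_strands[OF over] fst_in_crossings by fastforce+
  have s: "s \<in> {-1, 1}"
    using wf_sg[OF assms(2) c] by (simp add: s_def)
  have cancel: "sum snd (earlier D' x \<inter> {y. fst y \<in> {c, d}}) = 0" if x: "x \<in> strands D" for x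
  proof -
    have x': "x \<in> strands D'" "x \<notin> {(c, - s), (d, s)}" "x \<notin> {(c, s), (d, - s)}"
      using x strands_delx[OF cd(2)[symmetric]] by auto
    have "earlier D' x \<inter> {y. fst y \<in> {c, d}} =
        earlier D' x \<inter> {(c, - s), (d, s)} \<union> earlier D' x \<inter> {(c, s), (d, - s)}"
      using earlier_inter_crossing[OF assms(2) x'(1) s, of c]
        earlier_inter_crossing[OF assms(2) x'(1) s, of d] by blast
    moreover have "sum snd (earlier D' x \<inter> {(c, - s), (d, s)}) = 0"
      using sum_earlier_cancelling_pair[OF assms(2) _ _ x'(1,2)] over by (simp add: s_def)
    moreover have "sum snd (earlier D' x \<inter> {(c, s), (d, - s)}) = 0"
      using sum_earlier_cancelling_pair[OF assms(2) _ _ x'(1,3)] under by (simp add: s_def)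
    moreover have "earlier D' x \<inter> {(c, - s), (d, s)} \<inter> (earlier D' x \<inter> {(c, s), (d, - s)}) = {}"
      using cd(1) s by auto
    ultimately show ?thesis
      by (simp add: sum.union_disjoint finite_earlier)
  qed
  have "W D' a d = W D' a c"
    using W_eq_lab_norm[OF assms(2) c] W_eq_lab_norm[OF assms(2) d] cd(4)
      lab_norm_adj[OF assms(2) over] under lab_norm_adj[OF assms(2)] by (auto simp: s_def)
  moreover have "ocomp D' d = ocomp D' c"
    using wf_adj_pos(1)[OF assms(2) over] cd(4) by (simp add: ocomp_def over_pos_def)
  ultimately have "aff_term D' a c m + aff_term D' a d m = 0"
    using cd(4) by (simp add: aff_term_def)
  then show "aff_poly D a m = aff_poly D' a m"
    using aff_poly_delx[OF assms(1,2) cd(2)[symmetric] _ cd(3) cancel] c d cd(1) by simp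
qed

lemma strands_map: "comps D' = map (map g) (comps D) \<Longrightarrow> strands D' = g ` strands D"
  by (auto simp: strands_def)

lemma lab_norm_map:
  assumes "wf D" "wf D'" "comps D' = map (map g) (comps D)" "inj_on g (strands D)"
    and "y \<in> strands D"
  shows "fst (pos D' (g y)) = fst (pos D y)"
    and "lab_norm D' a (g y) = absl (a (fst (pos D y))) + (\<Sum>z\<in>earlier D y. snd (g z))"
proof -
  let ?i = "fst (pos D y)"
  have i: "?i < length (comps D)" "y \<in> set (comps D ! ?i)"
    using wf_pos_strand[OF assms(1,5)] by (metis nth_mem)+
  have ci: "comps D' ! ?i = map g (comps D ! ?i)"
    using assms(3) i(1) by simp
  have "?i < length (comps D')" "g y \<in> set (comps D' ! ?i)"
    using i ci assms(3) by auto
  then show p: "fst (pos D' (g y)) = ?i"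
    using wf_pos_in_comp[OF assms(2)] by simp
  have "insert y (set (comps D ! ?i)) \<subseteq> strands D"
    using assms(5) set_comp_subset_strands[OF i(1)] by blast
  then have "earlier D' (g y) = g ` earlier D y"
    unfolding earlier_def p ci
    using takeWhile_neq_map[OF inj_on_subset[OF assms(4)]] by simp
  moreover have "inj_on g (earlier D y)"
    using inj_on_subset[OF assms(4) earlier_subset_strands[OF assms(1,5)]] .
  ultimately show "lab_norm D' a (g y) = absl (a ?i) + (\<Sum>z\<in>earlier D y. snd (g z))"
    unfolding lab_norm_def p by (simp add: sum.reindex)
qed

lemma aff_poly_rename:
  assumes "wf D" "wf D'" "rename D D'"
  shows "aff_poly D a = aff_poly D' a"
proof
  fix m
  obtain f where f: "inj_on f (crossings D)" "comps D' = map (map (apfst f)) (comps D)"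
    "\<forall>c\<in>crossings D. sg D' (f c) = sg D c"
    using assms(3) unfolding rename_def by blast
  have inj: "inj_on (apfst f) (strands D)"
    using f(1) fst_in_crossings by (fastforce simp: inj_on_def apfst_def map_prod_def
        split: prod.splits dest: inj_onD)
  have cr: "crossings D' = f ` crossings D"
    unfolding crossings_eq_fst_strands strands_map[OF f(2)] by (force simp: image_iff)
  have L: "lab_norm D' a (apfst f y) = lab_norm D a y" "fst (pos D' (apfst f y)) = fst (pos D y)"
    if "y \<in> strands D" for y
    using lab_norm_map[OF assms(1,2) f(2) inj that] by (simp_all add: lab_norm_def)
  have "aff_term D' a (f c) = aff_term D a c" if c: "c \<in> crossings D" for c
  proof -
    have "(c, - sg D c) \<in> strands D" "(c, sg D c) \<in> strands D"
      using wf_strand_of_crossing[OF assms(1) c] wf_sg[OF assms(1) c] by auto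
    then show ?thesis
      using aff_term_eqI[OF assms(1,2) c, of "f c"] L[of "(c, - sg D c)"] L[of "(c, sg D c)"]
        cr c f(3) by simp
  qed
  then show "aff_poly D a m = aff_poly D' a m"
    unfolding aff_poly_eq_sum_aff_term cr using f(1) by (simp add: sum.reindex)
qed

definition swaps_adjacent :: "gdiag \<Rightarrow> (nat \<times> int \<Rightarrow> nat \<times> int) \<Rightarrow> bool" where
  "swaps_adjacent D \<sigma> \<longleftrightarrow> (\<forall>w. \<sigma> (\<sigma> w) = w) \<and>
     (\<forall>w\<in>strands D. \<sigma> w = w \<or> adj D w (\<sigma> w) \<or> adj D (\<sigma> w) w)"

definition swap_shift :: "gdiag \<Rightarrow> (nat \<times> int \<Rightarrow> nat \<times> int) \<Rightarrow> nat \<times> int \<Rightarrow> int" where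
  "swap_shift D \<sigma> w =
     (if adj D w (\<sigma> w) then snd (\<sigma> w) else if adj D (\<sigma> w) w then - snd (\<sigma> w) else 0)"

lemma swaps_adjacent_involution: "swaps_adjacent D \<sigma> \<Longrightarrow> \<sigma> (\<sigma> w) = w"
  unfolding swaps_adjacent_def by blast

lemma swaps_adjacent_cases:
  "swaps_adjacent D \<sigma> \<Longrightarrow> w \<in> strands D \<Longrightarrow> \<sigma> w = w \<or> adj D w (\<sigma> w) \<or> adj D (\<sigma> w) w"
  unfolding swaps_adjacent_def by blast

lemma swaps_adjacent_strands:
  assumes "swaps_adjacent D \<sigma>" "w \<in> strands D"
  shows "\<sigma> w \<in> strands D"
  using assms adj_strands unfolding swaps_adjacent_def by metis

lemma swaps_adjacent_earlier_iff:
  assumes "wf D" "swaps_adjacent D \<sigma>" "y \<in> strands D" "z \<in> strands D" "z \<noteq> y" "z \<noteq> \<sigma> y"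
  shows "\<sigma> z \<in> earlier D y \<longleftrightarrow> z \<in> earlier D y"
proof -
  note inv = swaps_adjacent_involution[OF assms(2)]
  have "\<sigma> z \<noteq> y"
    using assms(6) inv by metis
  moreover have "\<sigma> z = z \<or> adj D z (\<sigma> z) \<or> adj D (\<sigma> z) z"
    using swaps_adjacent_cases[OF assms(2,4)] .
  ultimately show ?thesis
    using earlier_adj_iff[OF assms(1) _ assms(3)] assms(5) by metis
qed

lemma swaps_adjacent_image_earlier:
  assumes "wf D" "swaps_adjacent D \<sigma>" "y \<in> strands D"
  shows "\<sigma> ` (earlier D y - {\<sigma> y}) = earlier D y - {\<sigma> y}"
proof -
  let ?F = "earlier D y - {\<sigma> y}"
  note inv = swaps_adjacent_involution[OF assms(2)]
  have F: "\<sigma> z \<in> ?F" if z: "z \<in> ?F" for z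
  proof -
    have "z \<in> strands D" "z \<noteq> y" "z \<noteq> \<sigma> y" "z \<in> earlier D y"
      using z earlier_subset_strands[OF assms(1,3)] not_in_earlier_self[of y D] by auto
    then have "\<sigma> z \<in> earlier D y"
      using swaps_adjacent_earlier_iff[OF assms] by blast
    moreover have "\<sigma> z \<noteq> \<sigma> y"
      using \<open>z \<noteq> y\<close> inv by metis
    ultimately show ?thesis by simp
  qed
  show ?thesis
  proof
    show "\<sigma> ` ?F \<subseteq> ?F"
      using F by (rule image_subsetI)
    show "?F \<subseteq> \<sigma> ` ?F"
    proof
      fix z assume "z \<in> ?F"
      from F[OF this] show "z \<in> \<sigma> ` ?F"
        by (rule rev_image_eqI) (simp add: inv)
    qed
  qed
qed

lemma swaps_adjacent_partner_in_earlier_iff: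
  assumes "wf D" "swaps_adjacent D \<sigma>" "y \<in> strands D"
  shows "\<sigma> y \<in> earlier D y \<longleftrightarrow> adj D (\<sigma> y) y"
proof
  assume "\<sigma> y \<in> earlier D y"
  moreover have "\<sigma> y = y \<or> adj D y (\<sigma> y) \<or> adj D (\<sigma> y) y"
    using swaps_adjacent_cases[OF assms(2,3)] .
  ultimately show "adj D (\<sigma> y) y"
    using earlier_adj_iff[OF assms(1) _ assms(3)] not_in_earlier_self[of y D] by metis
qed (rule adj_in_earlier[OF assms(1)])

lemma sum_earlier_swaps_adjacent:
  assumes "wf D" "swaps_adjacent D \<sigma>" "y \<in> strands D"
  shows "(\<Sum>z\<in>earlier D y. snd (\<sigma> z)) =
    sum snd (earlier D y) + (if adj D (\<sigma> y) y then snd y - snd (\<sigma> y) else 0)"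
proof -
  let ?F = "earlier D y - {\<sigma> y}"
  note inv = swaps_adjacent_involution[OF assms(2)]
  have "inj \<sigma>"
    by (rule injI) (metis inv)
  then have "(\<Sum>z\<in>?F. snd (\<sigma> z)) = sum snd ?F"
    using sum.reindex[of \<sigma> ?F snd] swaps_adjacent_image_earlier[OF assms]
    by (simp add: inj_on_subset)
  then show ?thesis
    using swaps_adjacent_partner_in_earlier_iff[OF assms] inv
      sum_diff1[OF finite_earlier, of snd D y "\<sigma> y"]
      sum_diff1[OF finite_earlier, of "\<lambda>z. snd (\<sigma> z)" D y "\<sigma> y"]
    by (auto split: if_splits)
qed

lemma swap_shift_fixed: "wf D \<Longrightarrow> \<sigma> w = w \<Longrightarrow> swap_shift D \<sigma> w = 0"
  using adj_asym by (fastforce simp: swap_shift_def)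

lemma lab_norm_swaps_adjacent:
  assumes "wf D" "wf D'" "swaps_adjacent D \<sigma>" "comps D' = map (map \<sigma>) (comps D)"
    and "w \<in> strands D"
  shows "lab_norm D' a w = lab_norm D a w + swap_shift D \<sigma> w"
    and "fst (pos D' w) = fst (pos D w)"
proof -
  note inv = swaps_adjacent_involution[OF assms(3)]
  define y where "y = \<sigma> w"
  have y: "y \<in> strands D" "\<sigma> y = w"
    using swaps_adjacent_strands[OF assms(3,5)] inv by (simp_all add: y_def)
  have "inj_on \<sigma> (strands D)"
    by (rule inj_onI) (metis inv)
  note map = lab_norm_map[OF assms(1,2,4) this y(1), unfolded y(2)]
  have "\<sigma> w = w \<or> adj D w y \<or> adj D y w"
    using swaps_adjacent_cases[OF assms(3,5)] by (simp add: y_def)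
  then have comp: "fst (pos D y) = fst (pos D w)"
    using wf_adj_pos(1)[OF assms(1)] y_def by metis
  then show "fst (pos D' w) = fst (pos D w)"
    using map(1) by simp
  have "lab_norm D' a w = absl (a (fst (pos D y))) + (\<Sum>z\<in>earlier D y. snd (\<sigma> z))"
    using map(2) .
  also have "\<dots> = lab_norm D a y + (if adj D w y then snd y - snd w else 0)"
    unfolding sum_earlier_swaps_adjacent[OF assms(1,3) y(1)] y(2) lab_norm_def by simp
  also have "\<dots> = lab_norm D a w + swap_shift D \<sigma> w"
    using \<open>\<sigma> w = w \<or> adj D w y \<or> adj D y w\<close>
  proof (elim disjE)
    assume "\<sigma> w = w"
    then show ?thesis
      using swap_shift_fixed[OF assms(1)] adj_asym[OF assms(1), of w w] by (simp add: y_def)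
  next
    assume "adj D w y"
    then show ?thesis
      using lab_norm_adj[OF assms(1), of w y a] by (simp add: swap_shift_def y_def[symmetric])
  next
    assume "adj D y w"
    then show ?thesis
      using lab_norm_adj[OF assms(1), of y w a] adj_asym[OF assms(1), of y w]
      by (simp add: swap_shift_def y_def[symmetric])
  qed
  finally show "lab_norm D' a w = lab_norm D a w + swap_shift D \<sigma> w" .
qed

lemma strands_swaps_adjacent:
  assumes "swaps_adjacent D \<sigma>" "comps D' = map (map \<sigma>) (comps D)"
  shows "strands D' = strands D"
proof -
  have "\<sigma> ` strands D = strands D"
    using swaps_adjacent_strands[OF assms(1)] swaps_adjacent_involution[OF assms(1)]
    by (metis image_subsetI rev_image_eqI subsetI subset_antisym)
  then show ?thesis
    using strands_map[OF assms(2)] by simp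
qed

lemma aff_term_swaps_adjacent:
  assumes "wf D" "wf D'" "swaps_adjacent D \<sigma>" "comps D' = map (map \<sigma>) (comps D)"
    and "sg D' = sg D" "c \<in> crossings D"
    and "swap_shift D \<sigma> (c, - sg D c) = swap_shift D \<sigma> (c, sg D c)"
  shows "aff_term D' a c = aff_term D a c"
proof -
  have c': "c \<in> crossings D'"
    using assms(6) strands_swaps_adjacent[OF assms(3,4)] by (simp add: crossings_eq_fst_strands)
  have "(c, - sg D c) \<in> strands D" "(c, sg D c) \<in> strands D"
    using wf_strand_of_crossing[OF assms(1,6)] wf_sg[OF assms(1,6)] by auto
  note L = lab_norm_swaps_adjacent[OF assms(1-4) this(1)] lab_norm_swaps_adjacent[OF assms(1-4) this(2)]
  have "W D' a c = W D a c"
    using W_eq_lab_norm[OF assms(1,6)] W_eq_lab_norm[OF assms(2) c'] L assms(5,7) by simp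
  moreover have "ocomp D' c = ocomp D c"
    using L assms(5) by (simp add: ocomp_def over_pos_def)
  ultimately show ?thesis
    unfolding aff_term_def using assms(5) by simp
qed

lemma swap_shift_pair:
  assumes "wf D" "(e = 1 \<and> adj D u v) \<or> (e = -1 \<and> adj D v u)" "\<sigma> u = v" "\<sigma> v = u"
  shows "swap_shift D \<sigma> u = e * snd v" "swap_shift D \<sigma> v = - e * snd u"
  using assms adj_asym[OF assms(1), of u v] adj_asym[OF assms(1), of v u]
  by (auto simp: swap_shift_def)

lemma swap2_triple_simps:
  assumes "distinct [u1, v1, u2, v2, u3, v3]"
  defines "\<sigma> \<equiv> swap2 u1 v1 \<circ> swap2 u2 v2 \<circ> swap2 u3 v3"
  shows "\<sigma> u1 = v1" "\<sigma> v1 = u1" "\<sigma> u2 = v2" "\<sigma> v2 = u2" "\<sigma> u3 = v3" "\<sigma> v3 = u3"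
    and "w \<notin> {u1, v1, u2, v2, u3, v3} \<Longrightarrow> \<sigma> w = w"
  using assms by (auto simp: swap2_def)

lemma swaps_adjacent_swap2:
  assumes "distinct [u1, v1, u2, v2, u3, v3]"
    and "adj D u1 v1 \<or> adj D v1 u1" "adj D u2 v2 \<or> adj D v2 u2" "adj D u3 v3 \<or> adj D v3 u3"
  shows "swaps_adjacent D (swap2 u1 v1 \<circ> swap2 u2 v2 \<circ> swap2 u3 v3)"
proof -
  define \<sigma> where "\<sigma> = swap2 u1 v1 \<circ> swap2 u2 v2 \<circ> swap2 u3 v3"
  note \<sigma> = swap2_triple_simps[OF assms(1), folded \<sigma>_def]
  have cases: "w \<in> {u1, v1, u2, v2, u3, v3} \<or> w \<notin> {u1, v1, u2, v2, u3, v3}" for w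
    by blast
  have "\<sigma> (\<sigma> w) = w" for w
    using cases[of w] by (auto simp: \<sigma>)
  moreover have "\<sigma> w = w \<or> adj D w (\<sigma> w) \<or> adj D (\<sigma> w) w" for w
    using cases[of w] assms(2-4) by (auto simp: \<sigma>)
  ultimately show ?thesis
    unfolding swaps_adjacent_def \<sigma>_def[symmetric] by blast
qed

lemma r3_sign_identities:
  fixes sx sy sz eT eM eB :: int
  assumes "sx \<in> {-1, 1}" "sy \<in> {-1, 1}" "sz \<in> {-1, 1}"
    and "eT \<in> {-1, 1}" "eM \<in> {-1, 1}" "eB \<in> {-1, 1}"
    and "sx * sy = eM * eB" "sx * sz = eT * eB"
  shows "eT * sy = eM * sz" "eT * sx = eB * sz" "eM * sx = eB * sy"
  using assms by auto

lemma aff_poly_r3: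
  assumes "wf D" "wf D'" "r3 D D'"
  shows "aff_poly D a = aff_poly D' a"
proof
  fix m
  obtain x y z eT eM eB where d: "distinct [x, y, z]" and sgD: "sg D' = sg D"
    and hT: "(eT = 1 \<and> adj D (x, - sg D x) (y, - sg D y)) \<or> (eT = -1 \<and> adj D (y, - sg D y) (x, - sg D x))"
    and hM: "(eM = 1 \<and> adj D (x, sg D x) (z, - sg D z)) \<or> (eM = -1 \<and> adj D (z, - sg D z) (x, sg D x))"
    and hB: "(eB = 1 \<and> adj D (y, sg D y) (z, sg D z)) \<or> (eB = -1 \<and> adj D (z, sg D z) (y, sg D y))"
    and s1: "sg D x * sg D y = eM * eB" and s2: "sg D x * sg D z = eT * eB"
    and cD': "comps D' = map (map (swap2 (x, - sg D x) (y, - sg D y) \<circ> swap2 (x, sg D x) (z, - sg D z)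
                \<circ> swap2 (y, sg D y) (z, sg D z))) (comps D)"
    using assms(3) unfolding r3_def Let_def by blast
  define \<sigma> where "\<sigma> = swap2 (x, - sg D x) (y, - sg D y) \<circ> swap2 (x, sg D x) (z, - sg D z)
                \<circ> swap2 (y, sg D y) (z, sg D z)"
  have "x \<in> crossings D" "y \<in> crossings D" "z \<in> crossings D"
    using hT hM adj_strands fst_in_crossings by fastforce+
  then have sgn: "sg D x \<in> {-1, 1}" "sg D y \<in> {-1, 1}" "sg D z \<in> {-1, 1}"
    using wf_sg[OF assms(1)] by blast+
  have e: "eT \<in> {-1, 1}" "eM \<in> {-1, 1}" "eB \<in> {-1, 1}"
    using hT hM hB by auto
  have dist: "distinct [(x, - sg D x), (y, - sg D y), (x, sg D x), (z, - sg D z), (y, sg D y), (z, sg D z)]"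
    using d sgn by auto
  note \<sigma>_simps = swap2_triple_simps[OF dist, folded \<sigma>_def]
  have sw: "swaps_adjacent D \<sigma>"
    unfolding \<sigma>_def using swaps_adjacent_swap2[OF dist] hT hM hB by blast
  note shiftT = swap_shift_pair[OF assms(1) hT \<sigma>_simps(1,2)]
  note shiftM = swap_shift_pair[OF assms(1) hM \<sigma>_simps(3,4)]
  note shiftB = swap_shift_pair[OF assms(1) hB \<sigma>_simps(5,6)]
  have "aff_term D' a c = aff_term D a c" if c: "c \<in> crossings D" for c
  proof (rule aff_term_swaps_adjacent[OF assms(1,2) sw cD'[folded \<sigma>_def] sgD c])
    consider "c = x" | "c = y" | "c = z" | "c \<notin> {x, y, z}"
      by blast
    then show "swap_shift D \<sigma> (c, - sg D c) = swap_shift D \<sigma> (c, sg D c)"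
    proof cases
      case 4
      then show ?thesis
        using swap_shift_fixed[OF assms(1)] \<sigma>_simps(7) by simp
    qed (use shiftT shiftM shiftB r3_sign_identities[OF sgn e s1 s2] in auto)
  qed
  moreover have "crossings D' = crossings D"
    using strands_swaps_adjacent[OF sw cD'[folded \<sigma>_def]] by (simp add: crossings_eq_fst_strands)
  ultimately show "aff_poly D a m = aff_poly D' a m"
    unfolding aff_poly_eq_sum_aff_term by simp
qed

lemma aff_poly_rmove: "rmove D D' \<Longrightarrow> aff_poly D a = aff_poly D' a"
  unfolding rmove_def using aff_poly_r1 aff_poly_r2 aff_poly_r3 aff_poly_rename by blast

lemma aff_poly_requiv:
  assumes "requiv D D'"
  shows "aff_poly D a = aff_poly D' a"
  using assms unfolding requiv_def
proof (induction rule: rtranclp_induct)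
  case (step D1 D2)
  then show ?case
    using aff_poly_rmove[of D1 D2 a] aff_poly_rmove[of D2 D1 a] by auto
qed simp

section \<open>Vassiliev order\<close>

lemma aff_term_sg_cong:
  assumes "g c = g' c"
  shows "aff_term (D\<lparr>sg := g\<rparr>) a c = aff_term (D\<lparr>sg := g'\<rparr>) a c"
proof -
  have at: "at (D\<lparr>sg := h\<rparr>) = at D" for h
    by (simp add: at_def fun_eq_iff)
  have pos: "pos (D\<lparr>sg := h\<rparr>) = pos D" for h
    by (simp add: pos_def passages_def at_def fun_eq_iff)
  have "lab (D\<lparr>sg := h\<rparr>) = lab D" for h
    unfolding lab_def self_pass_def at pos ..
  with pos assms show ?thesis
    unfolding aff_term_def W_def ocomp_def over_pos_def under_pos_def by simp
qed

lemma crossings_sg_update: "crossings (D\<lparr>sg := g\<rparr>) = crossings D"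
  by (simp add: crossings_def passages_def at_def)

lemma sum_Pow_alternating_eq_0:
  fixes F :: "'a set \<Rightarrow> int"
  assumes "finite S" "d \<in> S" "\<And>P. P \<subseteq> S - {d} \<Longrightarrow> F (insert d P) = F P"
  shows "(\<Sum>P\<in>Pow S. (-1) ^ card (S - P) * F P) = 0"
proof -
  let ?S0 = "S - {d}"
  have f0: "finite ?S0" using assms(1) by simp
  have PS: "Pow S = Pow ?S0 \<union> insert d ` Pow ?S0"
    using Pow_insert[of d ?S0] assms(2) by (simp add: insert_absorb)
  have disj: "Pow ?S0 \<inter> insert d ` Pow ?S0 = {}" by auto
  have inj: "inj_on (insert d) (Pow ?S0)" unfolding inj_on_def by blast
  have "(\<Sum>P\<in>Pow S. (-1) ^ card (S - P) * F P)
      = (\<Sum>P\<in>Pow ?S0. (-1) ^ card (S - P) * F P + (-1) ^ card (S - insert d P) * F (insert d P))"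
    unfolding PS using f0 disj inj by (simp add: sum.union_disjoint sum.reindex sum.distrib)
  also have "\<dots> = 0"
  proof (rule sum.neutral, rule ballI)
    fix P assume P: "P \<in> Pow ?S0"
    have "S - insert d P = ?S0 - P" "S - P = insert d (?S0 - P)"
      using P assms(2) by auto
    moreover have "card (insert d (?S0 - P)) = Suc (card (?S0 - P))"
      using f0 by simp
    ultimately show "(-1) ^ card (S - P) * F P + (-1) ^ card (S - insert d P) * F (insert d P) = 0"
      using assms(3)[of P] P by simp
  qed
  finally show ?thesis .
qed

lemma aff_poly_vorder_le_1: "vorder_le aff_poly 1"
  unfolding vorder_le_def
proof (intro allI impI)
  fix D S a m
  assume H: "wf D \<and> S \<subseteq> crossings D \<and> 1 < card S"
  then have fS: "finite S"
    using finite_crossings finite_subset by blast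
  let ?r = "\<lambda>P c. if c \<in> S then (if c \<in> P then 1 else -1) else sg D c"
  let ?h = "\<lambda>c v. aff_term (D\<lparr>sg := (\<lambda>_. v)\<rparr>) a c m"
  have "aff_poly (resolve D S P) a m = (\<Sum>c\<in>crossings D. ?h c (?r P c))" for P
    unfolding aff_poly_eq_sum_aff_term resolve_def crossings_sg_update
    by (intro sum.cong refl fun_cong[OF aff_term_sg_cong])
  then have "vext aff_poly D S a m = (\<Sum>P\<in>Pow S. \<Sum>c\<in>crossings D. (-1) ^ card (S - P) * ?h c (?r P c))"
    unfolding vext_def by (simp add: sum_distrib_left)
  also have "\<dots> = (\<Sum>c\<in>crossings D. \<Sum>P\<in>Pow S. (-1) ^ card (S - P) * ?h c (?r P c))"
    by (rule sum.swap)
  also have "\<dots> = 0"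
  proof (rule sum.neutral, rule ballI)
    fix c
    have "\<not> S \<subseteq> {c}"
      using H card_mono[of "{c}" S] by auto
    then obtain d where "d \<in> S" "d \<noteq> c"
      by blast
    then show "(\<Sum>P\<in>Pow S. (-1) ^ card (S - P) * ?h c (?r P c)) = 0"
      by (intro sum_Pow_alternating_eq_0[OF fS]) auto
  qed
  finally show "vext aff_poly D S a m = 0" .
qed

definition virtual_hopf :: "(nat \<Rightarrow> int) \<Rightarrow> gdiag" where
  "virtual_hopf g = \<lparr>comps = [[(0, -1)], [(0, 1)]], sg = g\<rparr>"

lemma passages_virtual_hopf: "passages (virtual_hopf g) = {(0, 0), (1, 0)}"
  by (auto simp: passages_def virtual_hopf_def less_Suc_eq)

lemma crossings_virtual_hopf: "crossings (virtual_hopf g) = {0}"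
  unfolding crossings_def passages_virtual_hopf by (simp add: at_def virtual_hopf_def)

lemma wf_virtual_hopf: "g 0 \<in> {-1, 1} \<Longrightarrow> wf (virtual_hopf g)"
  unfolding wf_def crossings_virtual_hopf passages_virtual_hopf
  by (auto simp: at_def virtual_hopf_def)

lemma aff_poly_virtual_hopf:
  assumes "g 0 \<in> {-1, 1}"
  shows "aff_poly (virtual_hopf g) (\<lambda>_. (0, 0)) m = g 0 *
    ((if m = mono (if g 0 = 1 then 0 else 1) (- g 0) then 1 else 0) - (if m = (\<lambda>_. 0) then 1 else 0))"
proof -
  let ?D = "virtual_hopf g" and ?a = "\<lambda>_. (0, 0)"
  have wf: "wf ?D"
    using wf_virtual_hopf[of g, OF assms] .
  have sg: "sg ?D = g"
    by (simp add: virtual_hopf_def)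
  have pos: "pos ?D (0, -1) = (0, 0)" "pos ?D (0, 1) = (1, 0)"
    using wf_pos_nth[OF wf, of 0 0] wf_pos_nth[OF wf, of 1 0] by (simp_all add: virtual_hopf_def)
  have "earlier ?D (0, -1) = {}" "earlier ?D (0, 1) = {}"
    using earlier_nth[OF wf, of 0 0] earlier_nth[OF wf, of 1 0] by (simp_all add: virtual_hopf_def)
  then have "lab_norm ?D ?a (0, e) = 0" if "e \<in> {-1, 1}" for e
    using that by (auto simp: lab_norm_def absl_def)
  then have "W ?D ?a 0 = - g 0"
    using W_eq_lab_norm[OF wf, of 0 ?a] assms by (auto simp: crossings_virtual_hopf sg)
  moreover have "ocomp ?D 0 = (if g 0 = 1 then 0 else 1)"
    using pos assms by (auto simp: ocomp_def over_pos_def sg)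
  ultimately show ?thesis
    by (simp add: aff_poly_eq_sum_aff_term crossings_virtual_hopf aff_term_def sg)
qed

lemma aff_poly_not_vorder_le_0: "\<not> vorder_le aff_poly 0"
proof
  let ?D = "virtual_hopf (\<lambda>_. 1)" and ?a = "\<lambda>_. (0, 0)" and ?m = "mono 0 (-1)"
  assume "vorder_le aff_poly 0"
  then have "vext aff_poly ?D {0} ?a ?m = 0"
    using wf_virtual_hopf[of "\<lambda>_. 1"] crossings_virtual_hopf[of "\<lambda>_. 1"]
    unfolding vorder_le_def by simp
  moreover have "resolve ?D {0} {0} = virtual_hopf (\<lambda>_. 1)"
    "resolve ?D {0} {} = virtual_hopf (\<lambda>c. if c = 0 then -1 else 1)"
    by (simp_all add: resolve_def virtual_hopf_def fun_eq_iff)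
  moreover have "?m \<noteq> mono 1 1" "?m \<noteq> (\<lambda>_. 0)"
    by (auto simp: mono_def fun_eq_iff)
  moreover have "Pow {0::nat} = {{}, {0}}"
    by auto
  ultimately show False
    using aff_poly_virtual_hopf[of "\<lambda>_. 1" ?m]
      aff_poly_virtual_hopf[of "\<lambda>c. if c = 0 then -1 else 1" ?m]
    by (simp add: vext_def)
qed

theorem proposition6:
  shows "(\<forall>D D' a. wf D \<and> requiv D D' \<longrightarrow> aff_poly D a = aff_poly D' a)
         \<and> vorder_one aff_poly"
  unfolding vorder_one_def
  using aff_poly_requiv aff_poly_vorder_le_1 aff_poly_not_vorder_le_0 by blast

end
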